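(* Let $k\ge 1$, $n=2k$, and let $C=(c_{ij})$ be a symmetric $n\times n$ relaxed Van der Veen matrix, i.e. \[ c_{j+1,j}+c_{lm}-c_{jl}-c_{j+1,m}\le 0 \] for all $j,l,m$ with $1\le j<j+1<l\le n$, $j+1<m\le n$, $j\equiv m \pmod 2$ and $j+1\equiv l\pmod 2$. Then the even-odd BTSP with distance matrix $C$ is pyramidally solvable, i.e. there is an optimal feasible tour which is pyramidal.
   Context: A tour on $\{1,\ldots,n\}$ is a cyclic permutation $\tau$ of $\{1,\ldots,n\}$; its length is $c(\tau)=\sum_{i=1}^n c_{i\tau(i)}$. In the bipartite TSP (BTSP), given a symmetric $n\times n$ matrix $C$ ($n=2k$) and a partition of the cities into $K_1,K_2$ with $|K_1|=|K_2|=k$, a feasible tour is a tour $\tau$ such that $\tau(i),\tau^{-1}(i)\in K_2$ for all $i\in K_1$ and $\tau(i),\tau^{-1}(i)\in K_1$ for all $i\in K_2$; the goal is a feasible tour of minimum length. The even-odd BTSP is the case $K_1=\{1,3,\ldots,2k-1\}$ and $K_2=\{2,4,\ldots,2k\}$. A tour $\tau=\langle 1,\tau_2,\ldots,\tau_m,n,\tau_{m+2},\ldots,\tau_{n},1\rangle$ (the cyclic sequence of visited cities starting at city 1) is pyramidal if $1<\tau_2<\cdots<\tau_m<n$ and $n>\tau_{m+2}>\cdots>\tau_{n}>1$. An instance is pyramidally solvable if an optimal solution can be found within the set of pyramidal tours. *)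

theory Defs
  imports Complex_Main "HOL-Combinatorics.Permutations"
begin

text \<open>Cities are 1..n; a matrix is a function nat => nat => real (only entries in {1..n} matter).\<close>

definition is_tour :: "nat \<Rightarrow> (nat \<Rightarrow> nat) \<Rightarrow> bool" where
  "is_tour n \<tau> \<longleftrightarrow> \<tau> permutes {1..n} \<and>
     (\<forall>i\<in>{1..n}. \<forall>j\<in>{1..n}. \<exists>m. (\<tau> ^^ m) i = j)"

definition tour_length :: "(nat \<Rightarrow> nat \<Rightarrow> real) \<Rightarrow> nat \<Rightarrow> (nat \<Rightarrow> nat) \<Rightarrow> real" where
  "tour_length C n \<tau> = (\<Sum>i=1..n. C i (\<tau> i))"

text \<open>Even-odd BTSP: K1 = odd cities, K2 = even cities.\<close>
definition feasible_eo :: "nat \<Rightarrow> (nat \<Rightarrow> nat) \<Rightarrow> bool" where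
  "feasible_eo n \<tau> \<longleftrightarrow>
     (\<forall>i\<in>{1..n}. odd i \<longrightarrow> even (\<tau> i) \<and> even (inv_into {1..n} \<tau> i)) \<and>
     (\<forall>i\<in>{1..n}. even i \<longrightarrow> odd (\<tau> i) \<and> odd (inv_into {1..n} \<tau> i))"

definition pyramidal :: "nat \<Rightarrow> (nat \<Rightarrow> nat) \<Rightarrow> bool" where
  "pyramidal n \<tau> \<longleftrightarrow> (\<exists>m. 0 < m \<and> m < n \<and> (\<tau> ^^ m) 1 = n \<and>
     (\<forall>i j. i < j \<and> j \<le> m \<longrightarrow> (\<tau> ^^ i) 1 < (\<tau> ^^ j) 1) \<and>
     (\<forall>i j. m \<le> i \<and> i < j \<and> j < n \<longrightarrow> (\<tau> ^^ j) 1 < (\<tau> ^^ i) 1))"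

definition symmetric_matrix :: "nat \<Rightarrow> (nat \<Rightarrow> nat \<Rightarrow> real) \<Rightarrow> bool" where
  "symmetric_matrix n C \<longleftrightarrow> (\<forall>i\<in>{1..n}. \<forall>j\<in>{1..n}. C i j = C j i)"

definition relaxed_vdv :: "nat \<Rightarrow> (nat \<Rightarrow> nat \<Rightarrow> real) \<Rightarrow> bool" where
  "relaxed_vdv n C \<longleftrightarrow> (\<forall>j l m. 1 \<le> j \<and> j + 1 < l \<and> l \<le> n \<and> j + 1 < m \<and> m \<le> n \<and>
      j mod 2 = m mod 2 \<and> (j + 1) mod 2 = l mod 2 \<longrightarrow>
      C (j+1) j + C l m - C j l - C (j+1) m \<le> 0)"

end

theory Submission
  imports Defs "HOL-Combinatorics.Cycles"
begin

text \<open>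
  A tour is the cyclic permutation \<^const>\<open>cycle_of_list\<close> of a list enumerating \<open>{1..n}\<close>, and it
  is feasible for the even-odd BTSP iff cyclically consecutive entries have opposite parity.
  Starting from a feasible tour listed from city 1, the cities \<open>j + 1 = 2, \<dots>, n\<close> are placed one
  at a time, keeping the invariant that the list begins with a valley on \<open>{1..j}\<close> ending in \<open>j\<close>.
  If \<open>j + 1\<close> comes right after \<open>j\<close>, nothing changes; if it is the last entry, the cycle is
  reversed. Otherwise \<open>j\<close> is followed by some \<open>l\<close> and \<open>j + 1\<close> by some \<open>m\<close>, both larger than
  \<open>j + 1\<close>, and reversing the segment from \<open>l\<close> to \<open>j + 1\<close> trades the edges \<open>{j, l}\<close>,
  \<open>{j + 1, m}\<close> for \<open>{j, j + 1}\<close>, \<open>{l, m}\<close>. Feasibility forces \<open>j \<equiv> m\<close> and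
  \<open>j + 1 \<equiv> l (mod 2)\<close>, so this is exactly the configuration in which the relaxed Van der Veen
  inequality says that the exchange does not increase the length, and the new tour is again
  feasible. At \<open>j = n\<close> the list is a valley ending in \<open>n\<close>, i.e. a pyramidal tour. Applied to an
  optimal feasible tour this produces an optimal pyramidal one.
\<close>

fun path_cost :: "('a \<Rightarrow> 'a \<Rightarrow> real) \<Rightarrow> 'a list \<Rightarrow> real" where
  "path_cost C (x # y # zs) = C x y + path_cost C (y # zs)"
| "path_cost C _ = 0"

definition cycle_cost :: "('a \<Rightarrow> 'a \<Rightarrow> real) \<Rightarrow> 'a list \<Rightarrow> real" where
  "cycle_cost C xs = path_cost C (xs @ [hd xs])"

definition cyclically :: "('a \<Rightarrow> 'a \<Rightarrow> bool) \<Rightarrow> 'a list \<Rightarrow> bool" where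
  "cyclically P xs \<longleftrightarrow> successively P (xs @ [hd xs])"

lemma path_cost_append:
  "xs \<noteq> [] \<Longrightarrow> ys \<noteq> [] \<Longrightarrow>
    path_cost C (xs @ ys) = path_cost C xs + C (last xs) (hd ys) + path_cost C ys"
  by (induction C xs rule: path_cost.induct) (auto simp: neq_Nil_conv)

lemma path_cost_rev:
  assumes "\<And>a b. a \<in> set xs \<Longrightarrow> b \<in> set xs \<Longrightarrow> C a b = C b a"
  shows "path_cost C (rev xs) = path_cost C xs"
  using assms
proof (induction C xs rule: path_cost.induct)
  case (1 C x y zs)
  then have "path_cost C (rev (y # zs) @ [x]) = path_cost C (rev (y # zs)) + C y x"
    by (subst path_cost_append) (auto simp: last_rev)
  with 1 show ?case by auto
qed auto

lemma cycle_cost_append_swap: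
  "cycle_cost C (xs @ ys) = cycle_cost C (ys @ xs)"
  unfolding cycle_cost_def
  by (cases "xs = []"; cases "ys = []") (simp_all add: path_cost_append)

lemma cycle_cost_rev:
  assumes "\<And>a b. a \<in> set xs \<Longrightarrow> b \<in> set xs \<Longrightarrow> C a b = C b a"
  shows "cycle_cost C (rev xs) = cycle_cost C xs"
proof (cases xs rule: rev_cases)
  case (snoc ys y)
  have "cycle_cost C (rev xs) = path_cost C (rev (y # ys @ [y]))"
    using snoc by (simp add: cycle_cost_def)
  also have "\<dots> = cycle_cost C (y # ys)"
    using assms snoc by (subst path_cost_rev) (auto simp: cycle_cost_def)
  also have "\<dots> = cycle_cost C xs"
    using snoc cycle_cost_append_swap[of C "[y]" ys] by simp
  finally show ?thesis .
qed simp

lemma cycle_cost_reverse_segment: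
  assumes "L \<noteq> []" "S \<noteq> []" "M \<noteq> []"
    and "\<And>a b. a \<in> set S \<Longrightarrow> b \<in> set S \<Longrightarrow> C a b = C b a"
  shows "cycle_cost C (L @ rev S @ M) + C (last L) (hd S) + C (last S) (hd M) =
    cycle_cost C (L @ S @ M) + C (last L) (last S) + C (hd S) (hd M)"
  using assms path_cost_rev[of S C]
  by (simp add: cycle_cost_def path_cost_append hd_rev last_rev)

lemma cyclically_append_swap:
  "cyclically P (xs @ ys) \<longleftrightarrow> cyclically P (ys @ xs)"
  unfolding cyclically_def
  by (cases "xs = []"; cases "ys = []") (auto simp: successively_append_iff)

lemma successively_rev_symp:
  assumes "symp P"
  shows "successively P (rev xs) \<longleftrightarrow> successively P xs"
proof -
  have "(\<lambda>a b. P b a) = P"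
    using assms by (auto simp: symp_def)
  then show ?thesis
    by (metis successively_rev)
qed

lemma successively_adjacent: "successively P (xs @ a # b # ys) \<Longrightarrow> P a b"
  by (simp add: successively_append_iff)

lemma cyclically_rev:
  assumes "symp P"
  shows "cyclically P (rev xs) \<longleftrightarrow> cyclically P xs"
proof (cases xs rule: rev_cases)
  case (snoc ys y)
  have "cyclically P (rev xs) \<longleftrightarrow> successively P (rev (y # ys @ [y]))"
    using snoc by (simp add: cyclically_def)
  also have "\<dots> \<longleftrightarrow> cyclically P (y # ys)"
    unfolding successively_rev_symp[OF assms] by (simp add: cyclically_def)
  also have "\<dots> \<longleftrightarrow> cyclically P xs"
    using snoc cyclically_append_swap[of P "[y]" ys] by simp
  finally show ?thesis .
qed simp

lemma cyclically_reverse_segment: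
  assumes "cyclically P (L @ S @ M)" "symp P" "L \<noteq> []" "S \<noteq> []" "M \<noteq> []"
    and "P (last L) (last S)" "P (hd S) (hd M)"
  shows "cyclically P (L @ rev S @ M)"
  using assms successively_rev_symp[OF assms(2), of S]
  by (auto simp del: successively_rev
      simp: cyclically_def successively_append_iff hd_rev last_rev)

definition valley :: "'a::linorder list \<Rightarrow> bool" where
  "valley xs \<longleftrightarrow> (\<exists>P x Q. xs = P @ x # Q \<and> sorted_wrt (>) (P @ [x]) \<and> sorted_wrt (<) (x # Q))"

lemma valley_singleton: "valley [x]"
  unfolding valley_def by (rule exI[of _ "[]"]) auto

lemma valley_snoc:
  assumes "valley xs" "\<forall>x\<in>set xs. x < y"
  shows "valley (xs @ [y])"
proof -
  obtain P x Q where "xs = P @ x # Q" "sorted_wrt (>) (P @ [x])" "sorted_wrt (<) (x # Q)"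
    using assms(1) unfolding valley_def by blast
  with assms(2) show ?thesis
    unfolding valley_def
    by (intro exI[of _ P] exI[of _ x] exI[of _ "Q @ [y]"]) (auto simp: sorted_wrt_append)
qed

lemma valley_rev:
  assumes "valley xs"
  shows "valley (rev xs)"
proof -
  obtain P x Q where "xs = P @ x # Q" "sorted_wrt (>) (P @ [x])" "sorted_wrt (<) (x # Q)"
    using assms unfolding valley_def by blast
  then show ?thesis
    unfolding valley_def
    by (intro exI[of _ "rev Q"] exI[of _ x] exI[of _ "rev P"])
      (auto simp: sorted_wrt_append sorted_wrt_rev)
qed

lemma path_cost_snoc_conv_map:
  "map f xs = tl xs @ [z] \<Longrightarrow> path_cost C (xs @ [z]) = (\<Sum>x\<leftarrow>xs. C x (f x))"
  by (induction C xs rule: path_cost.induct) auto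

lemma successively_snoc_conv_map:
  "map f xs = tl xs @ [z] \<Longrightarrow> successively P (xs @ [z]) \<longleftrightarrow> (\<forall>x\<in>set xs. P x (f x))"
  by (induction xs rule: induct_list012) auto

lemma map_cycle_of_list:
  "distinct xs \<Longrightarrow> xs \<noteq> [] \<Longrightarrow> map (cycle_of_list xs) xs = tl xs @ [hd xs]"
  using cyclic_rotation[of xs 1] by (simp add: rotate1_hd_tl)

lemma cycle_of_list_funpow_nth:
  "distinct xs \<Longrightarrow> i < length xs \<Longrightarrow>
    (cycle_of_list xs ^^ m) (xs ! i) = xs ! ((m + i) mod length xs)"
  by (metis cyclic_rotation nth_map nth_rotate)

lemma cycle_cost_conv_cycle_of_list:
  assumes "distinct xs"
  shows "cycle_cost C xs = (\<Sum>x\<in>set xs. C x (cycle_of_list xs x))"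
proof (cases "xs = []")
  case False
  have "cycle_cost C xs = (\<Sum>x\<leftarrow>xs. C x (cycle_of_list xs x))"
    unfolding cycle_cost_def by (rule path_cost_snoc_conv_map[OF map_cycle_of_list[OF assms False]])
  then show ?thesis
    using assms by (simp add: sum_list_distinct_conv_sum_set)
qed (simp add: cycle_cost_def)

lemma cyclically_conv_cycle_of_list:
  assumes "distinct xs"
  shows "cyclically P xs \<longleftrightarrow> (\<forall>x\<in>set xs. P x (cycle_of_list xs x))"
proof (cases "xs = []")
  case False
  show ?thesis
    unfolding cyclically_def by (rule successively_snoc_conv_map[OF map_cycle_of_list[OF assms False]])
qed (simp add: cyclically_def)

lemma is_tour_cycle_of_list:
  assumes "distinct xs" "set xs = {1..n}"
  shows "is_tour n (cycle_of_list xs)"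
  unfolding is_tour_def
proof (intro conjI ballI)
  show "cycle_of_list xs permutes {1..n}"
    using cycle_permutes[of xs] assms(2) by simp
next
  fix i j assume "i \<in> {1..n}" "j \<in> {1..n}"
  then obtain a b where ab: "a < length xs" "i = xs ! a" "b < length xs" "j = xs ! b"
    using assms(2) by (metis in_set_conv_nth)
  then have "(cycle_of_list xs ^^ (b + length xs - a)) i = xs ! ((b + length xs) mod length xs)"
    using cycle_of_list_funpow_nth[OF assms(1)] by simp
  with ab show "\<exists>m. (cycle_of_list xs ^^ m) i = j"
    by auto
qed

lemma tour_length_cycle_of_list:
  "distinct xs \<Longrightarrow> set xs = {1..n} \<Longrightarrow> tour_length C n (cycle_of_list xs) = cycle_cost C xs"
  by (simp add: tour_length_def cycle_cost_conv_cycle_of_list)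

lemma feasible_eo_iff:
  assumes "\<tau> permutes {1..n}"
  shows "feasible_eo n \<tau> \<longleftrightarrow> (\<forall>i\<in>{1..n}. odd (i + \<tau> i))"
proof -
  have "inv_into {1..n} \<tau> i \<in> {1..n} \<and> \<tau> (inv_into {1..n} \<tau> i) = i" if "i \<in> {1..n}" for i
    using that permutes_image[OF assms] by (metis inv_into_into f_inv_into_f)
  then show ?thesis
    unfolding feasible_eo_def by (metis add.commute odd_add)
qed

lemma feasible_eo_cycle_of_list:
  assumes "distinct xs" "set xs = {1..n}"
  shows "feasible_eo n (cycle_of_list xs) \<longleftrightarrow> cyclically (\<lambda>a b. odd (a + b)) xs"
  unfolding cyclically_conv_cycle_of_list[OF assms(1)]
  using feasible_eo_iff[of "cycle_of_list xs" n] cycle_permutes[of xs] assms(2) by simp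

lemma is_tour_cycle_of_listE:
  assumes "is_tour n \<sigma>" "1 \<le> n"
  obtains xs where "distinct xs" "set xs = {1..n}" "hd xs = 1" "\<sigma> = cycle_of_list xs"
proof
  define xs where "xs = support \<sigma> 1"
  have perm: "\<sigma> permutes {1..n}"
    using assms(1) by (simp add: is_tour_def)
  then have "permutation \<sigma>"
    by (rule permutes_imp_permutation[OF finite_atLeastAtMost])
  then show "distinct xs"
    unfolding xs_def by (rule cycle_of_permutation)
  have "(\<sigma> ^^ i) 1 \<in> {1..n}" for i
    using permutes_in_image[OF permutes_funpow[OF perm]] assms(2) by simp
  moreover have "x \<in> range (\<lambda>i. (\<sigma> ^^ i) 1)" if "x \<in> {1..n}" for x
    using assms that unfolding is_tour_def by fastforce
  ultimately have "range (\<lambda>i. (\<sigma> ^^ i) 1) = {1..n}"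
    by blast
  then show set_xs: "set xs = {1..n}"
    unfolding xs_def using support_set[OF \<open>permutation \<sigma>\<close>] by simp
  show "hd xs = 1"
    unfolding xs_def using least_power_of_permutation(2)[OF \<open>permutation \<sigma>\<close>, of 1]
    by (simp add: hd_map upt_conv_Cons)
  show "\<sigma> = cycle_of_list xs"
  proof
    fix x show "\<sigma> x = cycle_of_list xs x"
    proof (cases "x \<in> set xs")
      case True
      then show ?thesis
        unfolding xs_def by (rule cycle_restrict[OF \<open>permutation \<sigma>\<close>])
    next
      case False
      then show ?thesis
        using set_xs permutes_not_in[OF perm] id_outside_supp[OF False] by simp
    qed
  qed
qed

lemma symp_odd_add: "symp (\<lambda>a b. odd (a + b :: nat))"
  by (simp add: symp_def add.commute)

definition alternating_cycle :: "nat \<Rightarrow> nat list \<Rightarrow> bool" where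
  "alternating_cycle n xs \<longleftrightarrow> distinct xs \<and> set xs = {1..n} \<and> cyclically (\<lambda>a b. odd (a + b)) xs"

lemma alternating_cycle_iff_feasible_eo:
  "alternating_cycle n xs \<longleftrightarrow> distinct xs \<and> set xs = {1..n} \<and> feasible_eo n (cycle_of_list xs)"
  unfolding alternating_cycle_def using feasible_eo_cycle_of_list by blast

lemma alternating_cycle_append_swap:
  "alternating_cycle n (xs @ ys) \<longleftrightarrow> alternating_cycle n (ys @ xs)"
  unfolding alternating_cycle_def cyclically_append_swap[of _ xs ys] by auto

lemma alternating_cycle_rev: "alternating_cycle n (rev xs) \<longleftrightarrow> alternating_cycle n xs"
  unfolding alternating_cycle_def cyclically_rev[OF symp_odd_add] by simp

lemma alternating_cycle_upt:
  assumes "even n"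
  shows "alternating_cycle n [1..<Suc n]"
proof (cases "n = 0")
  case False
  have "successively (\<lambda>a b. odd (a + b)) [1..<Suc n]"
    by (simp add: successively_conv_nth del: upt_Suc)
  moreover have "hd [1..<Suc n] = 1" "last [1..<Suc n] = n"
    using False by (simp_all add: hd_upt last_upt del: upt_Suc)
  ultimately show ?thesis
    using assms False unfolding alternating_cycle_def cyclically_def
    by (simp add: successively_append_iff atLeastLessThanSuc_atLeastAtMost del: upt_Suc)
qed (simp add: alternating_cycle_def cyclically_def)

lemma relaxed_vdv_reverse_segment:
  assumes sym: "symmetric_matrix n C" and vdv: "relaxed_vdv n C"
    and xs: "set (L @ l # A @ Suc j # m # B) \<subseteq> {1..n}" "L \<noteq> []" "last L = j"
    and lm: "Suc j < l" "Suc j < m" and parity: "odd (j + l)" "odd (Suc j + m)"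
  shows "cycle_cost C (L @ Suc j # rev A @ l # m # B) \<le> cycle_cost C (L @ l # A @ Suc j # m # B)"
proof -
  have "set (l # A @ [Suc j]) \<subseteq> {1..n}"
    using xs(1) by auto
  then have symC: "C a b = C b a" if "a \<in> set (l # A @ [Suc j])" "b \<in> set (l # A @ [Suc j])" for a b
    using sym that unfolding symmetric_matrix_def by blast
  have "j \<in> set L"
    using xs(2,3) by auto
  then have range: "1 \<le> j" "l \<le> n" "m \<le> n"
    using xs(1) by auto
  have "j mod 2 = m mod 2" "Suc j mod 2 = l mod 2"
    using parity by presburger+
  then have "C (Suc j) j + C l m - C j l - C (Suc j) m \<le> 0"
    using vdv range lm unfolding relaxed_vdv_def by simp
  moreover have "C (Suc j) j = C j (Suc j)"
    using sym range lm unfolding symmetric_matrix_def by simp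
  moreover have "cycle_cost C (L @ Suc j # rev A @ l # m # B) + C j l + C (Suc j) m =
      cycle_cost C (L @ l # A @ Suc j # m # B) + C j (Suc j) + C l m"
    using cycle_cost_reverse_segment[where S = "l # A @ [Suc j]" and M = "m # B", OF xs(2) _ _ symC] xs(3)
    by simp
  ultimately show ?thesis
    by linarith
qed

lemma relaxed_vdv_exchange:
  assumes sym: "symmetric_matrix n C" and vdv: "relaxed_vdv n C"
    and alt: "alternating_cycle n (L @ l # A @ Suc j # m # B)"
    and L: "L \<noteq> []" "set L = {1..j}" "last L = j"
  shows "alternating_cycle n (L @ Suc j # rev A @ l # m # B)"
    and "cycle_cost C (L @ Suc j # rev A @ l # m # B) \<le> cycle_cost C (L @ l # A @ Suc j # m # B)"
proof -
  let ?P = "\<lambda>a b. odd (a + b :: nat)"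
  have dist: "distinct (L @ l # A @ Suc j # m # B)"
    and set_eq: "set (L @ l # A @ Suc j # m # B) = {1..n}"
    and cyc: "cyclically ?P (L @ l # A @ Suc j # m # B)"
    using alt unfolding alternating_cycle_def by auto
  have "l \<in> set (L @ l # A @ Suc j # m # B)" "m \<in> set (L @ l # A @ Suc j # m # B)"
    by simp_all
  then have "l \<in> {1..n}" "m \<in> {1..n}"
    unfolding set_eq by blast+
  moreover have "l \<notin> set L" "m \<notin> set L" "l \<noteq> Suc j" "m \<noteq> Suc j"
    using dist by auto
  ultimately have l: "Suc j < l" and m: "Suc j < m"
    using L(2) by auto
  obtain L0 where L0: "L = L0 @ [j]"
    using L(1,3) by (metis append_butlast_last_id)
  define h where "h = hd (L @ l # A @ Suc j # m # B)"
  have succ: "successively ?P (L0 @ j # l # A @ Suc j # m # B @ [h])"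
    using cyc unfolding cyclically_def h_def by (simp add: L0)
  have parity: "odd (j + l)" "odd (Suc j + m)"
    using successively_adjacent[OF succ]
      successively_adjacent[of ?P "L0 @ j # l # A" "Suc j" m "B @ [h]"] succ
    by simp_all
  show "cycle_cost C (L @ Suc j # rev A @ l # m # B) \<le> cycle_cost C (L @ l # A @ Suc j # m # B)"
    using set_eq by (intro relaxed_vdv_reverse_segment[OF sym vdv _ L(1,3) l m parity]) simp
  have "cyclically ?P (L @ rev (l # A @ [Suc j]) @ m # B)"
    using cyc parity L(1,3) by (intro cyclically_reverse_segment[OF _ symp_odd_add]) auto
  then show "alternating_cycle n (L @ Suc j # rev A @ l # m # B)"
    using dist set_eq unfolding alternating_cycle_def by auto
qed

definition valley_prefix :: "nat \<Rightarrow> nat list \<Rightarrow> bool" where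
  "valley_prefix j xs \<longleftrightarrow>
    (\<exists>L R. xs = L @ R \<and> L \<noteq> [] \<and> set L = {1..j} \<and> last L = j \<and> valley L)"

lemma valley_prefix_snocI:
  assumes "valley L" "set L = {1..j}"
  shows "valley_prefix (Suc j) ((L @ [Suc j]) @ R)"
proof -
  have "valley (L @ [Suc j])"
    using assms by (intro valley_snoc) auto
  moreover have "set (L @ [Suc j]) = {1..Suc j}"
    using assms(2) by auto
  ultimately show ?thesis
    unfolding valley_prefix_def by (intro exI[of _ "L @ [Suc j]"] exI[of _ R]) simp
qed

lemma valley_prefix_step:
  assumes sym: "symmetric_matrix n C" and vdv: "relaxed_vdv n C"
    and xs: "alternating_cycle n xs" "valley_prefix j xs" and "j < n"
  obtains ys where "alternating_cycle n ys" "valley_prefix (Suc j) ys"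
    "cycle_cost C ys \<le> cycle_cost C xs"
proof -
  obtain L R where xs_eq: "xs = L @ R" and L: "L \<noteq> []" "set L = {1..j}" "last L = j" "valley L"
    using xs(2) unfolding valley_prefix_def by blast
  have "Suc j \<in> set (L @ R)"
    using xs(1) \<open>j < n\<close> unfolding xs_eq alternating_cycle_def by simp
  then have "Suc j \<in> set R"
    using L(2) by auto
  then obtain R1 R2 where R: "R = R1 @ Suc j # R2"
    by (meson split_list)
  consider "R1 = []" | "R1 \<noteq> []" "R2 = []" | l A m B where "R1 = l # A" "R2 = m # B"
    by (meson neq_Nil_conv)
  then show ?thesis
  proof cases
    case 1
    have "valley_prefix (Suc j) xs"
      using valley_prefix_snocI[OF L(4,2), of R2] unfolding xs_eq R 1 by simp
    with xs(1) show ?thesis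
      by (rule that) simp
  next
    case 2
    define ys where "ys = rev (R @ L)"
    have "alternating_cycle n ys"
      unfolding ys_def alternating_cycle_rev using xs(1) xs_eq alternating_cycle_append_swap by blast
    moreover have "valley_prefix (Suc j) ys"
      using valley_prefix_snocI[OF valley_rev[OF L(4)], of j "rev R1"] L(2)
      unfolding ys_def R 2 by simp
    moreover have "cycle_cost C ys = cycle_cost C (R @ L)"
      unfolding ys_def using sym xs(1) xs_eq
      by (intro cycle_cost_rev) (auto simp: symmetric_matrix_def alternating_cycle_def)
    then have "cycle_cost C ys \<le> cycle_cost C xs"
      unfolding xs_eq cycle_cost_append_swap[of C L R] by simp
    ultimately show ?thesis
      by (rule that)
  next
    case 3
    have "alternating_cycle n (L @ l # A @ Suc j # m # B)"
      using xs(1) unfolding xs_eq R 3 by simp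
    note exchange = relaxed_vdv_exchange[OF sym vdv this L(1-3)]
    have "valley_prefix (Suc j) (L @ Suc j # rev A @ l # m # B)"
      using valley_prefix_snocI[OF L(4,2), of "rev A @ l # m # B"] by simp
    then show ?thesis
      using that[OF exchange(1)] exchange(2) unfolding xs_eq R 3 by simp
  qed
qed

lemma valley_prefix_extend:
  assumes sym: "symmetric_matrix n C" and vdv: "relaxed_vdv n C" and "j \<le> n"
  shows "alternating_cycle n xs \<Longrightarrow> valley_prefix j xs \<Longrightarrow>
    \<exists>ys. alternating_cycle n ys \<and> valley_prefix n ys \<and> cycle_cost C ys \<le> cycle_cost C xs"
  using \<open>j \<le> n\<close>
proof (induction j arbitrary: xs rule: inc_induct)
  case base
  then show ?case by blast
next
  case (step j)
  obtain ys where ys: "alternating_cycle n ys" "valley_prefix (Suc j) ys"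
    "cycle_cost C ys \<le> cycle_cost C xs"
    using valley_prefix_step[OF sym vdv step.prems step.hyps(2)] by blast
  with step.IH show ?case
    by force
qed

lemma valley_prefix_one:
  assumes "alternating_cycle n xs" "hd xs = 1" "1 \<le> n"
  shows "valley_prefix 1 xs"
proof -
  have "xs \<noteq> []"
    using assms(1,3) by (auto simp: alternating_cycle_def)
  then have "xs = [1] @ tl xs"
    using assms(2) by (cases xs) auto
  then show ?thesis
    unfolding valley_prefix_def
    by (intro exI[of _ "[1]"] exI[of _ "tl xs"]) (simp add: valley_singleton)
qed

lemma valley_prefix_complete:
  assumes "alternating_cycle n xs" "valley_prefix n xs"
  shows "valley xs" "last xs = n"
proof -
  obtain L R where LR: "xs = L @ R" "L \<noteq> []" "set L = {1..n}" "last L = n" "valley L"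
    using assms(2) unfolding valley_prefix_def by blast
  have "R = []"
    using assms(1) LR(1,3) unfolding alternating_cycle_def by (cases R) auto
  then show "valley xs" "last xs = n"
    using LR by auto
qed

lemma pyramidal_cycle_of_list:
  assumes "distinct (U @ n # D)" "set (U @ n # D) = {1..n}" "U \<noteq> []" "hd U = 1"
    and up: "sorted_wrt (<) (U @ [n])" and down: "sorted_wrt (>) (n # D)"
  shows "pyramidal n (cycle_of_list (U @ n # D))"
proof -
  define zs where "zs = U @ n # D"
  define m where "m = length U"
  have len: "length zs = n"
    using distinct_card[OF assms(1)] assms(2) unfolding zs_def by simp
  have orbit: "(cycle_of_list zs ^^ i) 1 = zs ! i" if "i < n" for i
  proof -
    have "zs ! 0 = 1"
      using assms(3,4) unfolding zs_def by (cases U) auto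
    then show ?thesis
      using cycle_of_list_funpow_nth[of zs 0 i] assms(1) len that unfolding zs_def by auto
  qed
  have zs_up: "zs ! i = (U @ [n]) ! i" if "i \<le> m" for i
    using that unfolding zs_def m_def by (simp add: nth_append)
  have zs_down: "zs ! i = (n # D) ! (i - m)" if "m \<le> i" for i
    using that unfolding zs_def m_def by (simp add: nth_append)
  have "m < n"
    using len unfolding zs_def m_def by simp
  show ?thesis
    unfolding pyramidal_def zs_def[symmetric]
  proof (intro exI conjI allI impI)
    show "0 < m" "m < n"
      using assms(3) \<open>m < n\<close> unfolding m_def by auto
    show "(cycle_of_list zs ^^ m) 1 = n"
      using orbit[OF \<open>m < n\<close>] zs_up[of m] unfolding m_def by (simp add: nth_append)
  next
    fix i j assume "i < j \<and> j \<le> m"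
    then show "(cycle_of_list zs ^^ i) 1 < (cycle_of_list zs ^^ j) 1"
      using orbit zs_up sorted_wrt_nth_less[OF up] \<open>m < n\<close> unfolding m_def by auto
  next
    fix i j assume "m \<le> i \<and> i < j \<and> j < n"
    then show "(cycle_of_list zs ^^ j) 1 < (cycle_of_list zs ^^ i) 1"
      using orbit zs_down sorted_wrt_nth_less[OF down, of "i - m" "j - m"] len
      unfolding zs_def m_def by auto
  qed
qed

lemma pyramidal_cycle_of_list_valley:
  assumes "distinct ys" "set ys = {1..n}" "valley ys" "last ys = n" "2 \<le> n"
  shows "pyramidal n (cycle_of_list ys)"
proof -
  obtain P x Q where ys: "ys = P @ x # Q" and down: "sorted_wrt (>) (P @ [x])"
    and up: "sorted_wrt (<) (x # Q)"
    using assms(3) unfolding valley_def by blast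
  have "x = 1"
  proof (rule ccontr)
    assume "x \<noteq> 1"
    moreover have "1 \<in> set ys"
      using assms(2,5) by simp
    moreover have "x \<in> {1..n}"
      using assms(2) ys by fastforce
    ultimately show False
      using down up unfolding ys by (auto simp: sorted_wrt_append)
  qed
  have "Q \<noteq> []"
    using assms(4,5) ys \<open>x = 1\<close> by auto
  then have "last Q = n"
    using assms(4) ys by simp
  define Q' where "Q' = butlast Q"
  have Q: "Q = Q' @ [n]"
    unfolding Q'_def using append_butlast_last_id[OF \<open>Q \<noteq> []\<close>] \<open>last Q = n\<close> by simp
  define zs where "zs = (1 # Q') @ n # P"
  have "zs = rotate (length P) ys"
    unfolding zs_def ys Q \<open>x = 1\<close> by (simp add: rotate_append)
  then have zs: "distinct zs" "set zs = {1..n}" "cycle_of_list ys = cycle_of_list zs"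
    using assms(1,2) cycle_of_list_rotate_independent by auto
  have "y < n" if "y \<in> set P" for y
  proof -
    have "y \<in> {1..n}" "y \<noteq> n"
      using that zs(1,2) unfolding zs_def by auto
    then show ?thesis
      by simp
  qed
  then have "sorted_wrt (>) (n # P)"
    using down by (simp add: sorted_wrt_append)
  moreover have "sorted_wrt (<) ((1 # Q') @ [n])"
    using up unfolding Q \<open>x = 1\<close> by simp
  ultimately show ?thesis
    using pyramidal_cycle_of_list[of "1 # Q'" n P] zs unfolding zs_def by simp
qed

lemma pyramidal_tour_improvement:
  assumes sym: "symmetric_matrix n C" and vdv: "relaxed_vdv n C" and "2 \<le> n"
    and \<sigma>: "is_tour n \<sigma>" "feasible_eo n \<sigma>"
  obtains \<tau> where "is_tour n \<tau>" "feasible_eo n \<tau>" "pyramidal n \<tau>"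
    "tour_length C n \<tau> \<le> tour_length C n \<sigma>"
proof -
  obtain xs where xs: "distinct xs" "set xs = {1..n}" "hd xs = 1" "\<sigma> = cycle_of_list xs"
    using is_tour_cycle_of_listE[OF \<sigma>(1)] \<open>2 \<le> n\<close> by auto
  then have "alternating_cycle n xs"
    using \<sigma>(2) by (simp add: alternating_cycle_iff_feasible_eo)
  moreover have "valley_prefix 1 xs"
    using valley_prefix_one \<open>alternating_cycle n xs\<close> xs(3) \<open>2 \<le> n\<close> by simp
  ultimately obtain ys where ys: "alternating_cycle n ys" "valley_prefix n ys"
      "cycle_cost C ys \<le> cycle_cost C xs"
    using valley_prefix_extend[OF sym vdv, of 1 xs] \<open>2 \<le> n\<close> by auto
  then have tour: "distinct ys" "set ys = {1..n}" "feasible_eo n (cycle_of_list ys)"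
    by (simp_all add: alternating_cycle_iff_feasible_eo)
  show ?thesis
  proof
    show "is_tour n (cycle_of_list ys)"
      using tour(1,2) by (rule is_tour_cycle_of_list)
    show "feasible_eo n (cycle_of_list ys)"
      by (fact tour(3))
    show "pyramidal n (cycle_of_list ys)"
      using tour(1,2) valley_prefix_complete[OF ys(1,2)] \<open>2 \<le> n\<close>
      by (rule pyramidal_cycle_of_list_valley)
    show "tour_length C n (cycle_of_list ys) \<le> tour_length C n \<sigma>"
      using ys(3) tour(1,2) xs tour_length_cycle_of_list by simp
  qed
qed

lemma optimal_feasible_tour_exists:
  assumes "even n"
  obtains \<sigma> where "is_tour n \<sigma>" "feasible_eo n \<sigma>"
    "\<And>\<rho>. is_tour n \<rho> \<Longrightarrow> feasible_eo n \<rho> \<Longrightarrow> tour_length C n \<sigma> \<le> tour_length C n \<rho>"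
proof -
  let ?F = "{\<sigma>. is_tour n \<sigma> \<and> feasible_eo n \<sigma>}"
  have "finite ?F"
    by (rule finite_subset[OF _ finite_permutations[OF finite_atLeastAtMost]])
      (auto simp: is_tour_def)
  moreover have "cycle_of_list [1..<Suc n] \<in> ?F"
    using alternating_cycle_upt[OF assms] is_tour_cycle_of_list
    by (simp add: alternating_cycle_iff_feasible_eo del: upt_Suc)
  ultimately obtain \<sigma> where "is_arg_min (tour_length C n) (\<lambda>\<sigma>. \<sigma> \<in> ?F) \<sigma>"
    using ex_is_arg_min_if_finite by blast
  then show ?thesis
    using that by (auto simp: is_arg_min_linorder)
qed

theorem corollary3p3:
  fixes k n :: nat and C :: "nat \<Rightarrow> nat \<Rightarrow> real"
  assumes "k \<ge> 1" and "n = 2 * k"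
    and "symmetric_matrix n C" and "relaxed_vdv n C"
  shows "\<exists>\<tau>. is_tour n \<tau> \<and> feasible_eo n \<tau> \<and> pyramidal n \<tau> \<and>
           (\<forall>\<sigma>. is_tour n \<sigma> \<and> feasible_eo n \<sigma> \<longrightarrow> tour_length C n \<tau> \<le> tour_length C n \<sigma>)"
proof -
  obtain \<sigma> where \<sigma>: "is_tour n \<sigma>" "feasible_eo n \<sigma>"
    and opt: "\<And>\<rho>. is_tour n \<rho> \<Longrightarrow> feasible_eo n \<rho> \<Longrightarrow> tour_length C n \<sigma> \<le> tour_length C n \<rho>"
    using optimal_feasible_tour_exists[of n C] assms(2) by auto
  have "2 \<le> n"
    using assms(1,2) by simp
  obtain \<tau> where "is_tour n \<tau>" "feasible_eo n \<tau>" "pyramidal n \<tau>"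
      and \<tau>_le_\<sigma>: "tour_length C n \<tau> \<le> tour_length C n \<sigma>"
    by (rule pyramidal_tour_improvement[OF assms(3,4) \<open>2 \<le> n\<close> \<sigma>])
  moreover have "tour_length C n \<tau> \<le> tour_length C n \<rho>"
    if "is_tour n \<rho> \<and> feasible_eo n \<rho>" for \<rho>
    using \<tau>_le_\<sigma> opt[of \<rho>] that by simp
  ultimately show ?thesis
    by blast
qed

end
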